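(* Let $f\in\mathbb{Q}[x]$ be a univariate numerical polynomial of degree $n$, written uniquely as $f(x)=\sum_{i=0}^n a_i\binom{x}{i}$ with $a_i\in\mathbb{Z}$, and set $a_i=0$ for $i<0$ and $i>n$. An integer $m$ divides $\gcd\{kf(k)\mid k\in\mathbb{Z}\}$ if and only if \[ k(a_k+a_{k-1})\equiv 0\pmod m\ \text{ for all } 1\le k\le n,\qquad a_1+a_0\equiv0\pmod m,\qquad (n+1)a_n\equiv0\pmod m. \]
   Context: A numerical polynomial is a polynomial with rational coefficients taking integer values at all integers; $\binom{x}{i}=x(x-1)\cdots(x-i+1)/i!$. *)

theory Defs
  imports "HOL-Computational_Algebra.Polynomial"
begin

end

theory Submission
  imports Defs
begin

text \<open>Multiplying by x shifts the binomial basis: x (x gchoose i) = i (x gchoose i) +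
  (i+1) (x gchoose (i+1)). Hence k f(k) = \<Sum>j\<le>n+1. b(j) (k gchoose j) with
  b(j) = j (a(j) + a(j-1)). An integer combination of the binomial polynomials takes only
  values divisible by m iff all its coefficients are: evaluating at k = 0, 1, 2, \<dots> recovers
  the coefficients one by one, since (k gchoose j) vanishes for j > k and equals 1 for j = k.\<close>

lemma times_gbinomial_sum:
  fixes c :: "nat \<Rightarrow> 'a::field_char_0"
  assumes "c (Suc n) = 0"
  shows "x * (\<Sum>i=0..n. c i * (x gchoose i))
       = (\<Sum>j=0..Suc n. of_nat j * (c j + c (j - 1)) * (x gchoose j))"
proof -
  have "x * (\<Sum>i=0..n. c i * (x gchoose i))
      = (\<Sum>i=0..n. c i * (of_nat i * (x gchoose i)))
        + (\<Sum>i=0..n. c i * (of_nat (Suc i) * (x gchoose Suc i)))"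
  proof -
    have "x * (\<Sum>i=0..n. c i * (x gchoose i)) = (\<Sum>i=0..n. c i * (x * (x gchoose i)))"
      by (simp add: sum_distrib_left ac_simps)
    then show ?thesis
      by (simp only: gbinomial_mult_1 distrib_left sum.distrib)
  qed
  also have "(\<Sum>i=0..n. c i * (of_nat i * (x gchoose i)))
      = (\<Sum>j=0..Suc n. of_nat j * c j * (x gchoose j))"
    using assms by (simp add: mult_ac)
  also have "(\<Sum>i=0..n. c i * (of_nat (Suc i) * (x gchoose Suc i)))
      = (\<Sum>j=0..Suc n. of_nat j * c (j - 1) * (x gchoose j))"
    by (subst sum.atLeast0_atMost_Suc_shift) (simp add: mult_ac)
  finally show ?thesis
    by (simp add: sum.distrib[symmetric] algebra_simps)
qed

lemma dvd_binomial_combination_iff: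
  fixes b :: "nat \<Rightarrow> int" and m :: int
  shows "(\<forall>k. m dvd (\<Sum>j=0..N. b j * int (k choose j))) \<longleftrightarrow> (\<forall>j\<le>N. m dvd b j)"
proof
  assume dvd_values: "\<forall>k. m dvd (\<Sum>j=0..N. b j * int (k choose j))"
  have "j \<le> N \<Longrightarrow> m dvd b j" for j
  proof (induction j rule: less_induct)
    case (less j)
    have "m dvd (\<Sum>i\<in>{0..N} - {j}. b i * int (j choose i))"
    proof (rule dvd_sum)
      fix i assume i: "i \<in> {0..N} - {j}"
      show "m dvd b i * int (j choose i)"
      proof (cases "i < j")
        case True
        then show ?thesis using less by simp
      next
        case False
        then show ?thesis using i by (simp add: binomial_eq_0)
      qed
    qed
    moreover have "(\<Sum>i=0..N. b i * int (j choose i))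
        = b j + (\<Sum>i\<in>{0..N} - {j}. b i * int (j choose i))"
      using less.prems by (subst sum.remove[of _ j]) auto
    moreover have "m dvd (\<Sum>i=0..N. b i * int (j choose i))"
      using dvd_values by blast
    ultimately show "m dvd b j"
      by (simp add: dvd_add_left_iff)
  qed
  then show "\<forall>j\<le>N. m dvd b j" by blast
qed (auto intro!: dvd_sum)

lemma gbinomial_of_int_in_Ints: "(of_int k :: 'a::field_char_0) gchoose j \<in> \<int>"
  unfolding of_int_gbinomial[symmetric] by (rule Ints_of_int)

lemma dvd_Gcd_gbinomial_values_iff:
  fixes b :: "nat \<Rightarrow> int" and m :: int
  shows "m dvd Gcd {z. \<exists>k::int. (of_int z :: 'a::field_char_0)
                               = (\<Sum>j=0..N. of_int (b j) * (of_int k gchoose j))}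
    \<longleftrightarrow> (\<forall>j\<le>N. m dvd b j)"
    (is "_ dvd Gcd ?S \<longleftrightarrow> _")
proof -
  have "(\<forall>z\<in>?S. m dvd z) \<longleftrightarrow> (\<forall>j\<le>N. m dvd b j)"
  proof
    assume "\<forall>z\<in>?S. m dvd z"
    moreover have "(\<Sum>j=0..N. b j * int (k choose j)) \<in> ?S" for k
      by (intro CollectI exI[of _ "int k"]) (simp flip: binomial_gbinomial)
    ultimately have "\<forall>k. m dvd (\<Sum>j=0..N. b j * int (k choose j))"
      by blast
    then show "\<forall>j\<le>N. m dvd b j"
      by (simp only: dvd_binomial_combination_iff)
  next
    assume b_dvd: "\<forall>j\<le>N. m dvd b j"
    show "\<forall>z\<in>?S. m dvd z"
    proof
      fix z assume "z \<in> ?S"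
      then obtain k :: int
        where k: "of_int z = (\<Sum>j=0..N. of_int (b j) * ((of_int k :: 'a) gchoose j))"
        by blast
      have "\<forall>j. \<exists>c. (of_int k :: 'a) gchoose j = of_int c"
        using gbinomial_of_int_in_Ints Ints_cases by blast
      then obtain c where c: "\<And>j. (of_int k :: 'a) gchoose j = of_int (c j)"
        by (metis choice)
      have "(of_int z :: 'a) = of_int (\<Sum>j=0..N. b j * c j)"
        using k by (simp add: c)
      then have "z = (\<Sum>j=0..N. b j * c j)"
        by (simp only: of_int_eq_iff)
      then show "m dvd z"
        using b_dvd by (auto intro!: dvd_sum)
    qed
  qed
  then show ?thesis
    by (simp add: dvd_Gcd_iff)
qed

theorem corollary3p7:
  fixes f :: "rat poly" and n :: nat and a :: "nat \<Rightarrow> int" and m :: int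
  assumes numerical: "\<forall>k::int. poly f (of_int k) \<in> \<int>"
    and deg: "degree f = n"
    and repr: "\<forall>x::rat. poly f x = (\<Sum>i=0..n. of_int (a i) * (x gchoose i))"
    and zero_above: "\<forall>i>n. a i = 0"
  shows "m dvd Gcd {z::int. \<exists>k::int. rat_of_int z = rat_of_int k * poly f (of_int k)}
     \<longleftrightarrow> (\<forall>k\<in>{1..n}. m dvd int k * (a k + a (k - 1)))
         \<and> m dvd (a 1 + a 0)
         \<and> m dvd (int n + 1) * a n"
proof -
  define b where "b j = int j * (a j + a (j - 1))" for j
  have shift: "x * poly f x = (\<Sum>j=0..Suc n. of_int (b j) * (x gchoose j))" for x :: rat
    using times_gbinomial_sum[of "\<lambda>i. of_int (a i)" n x] zero_above
    by (simp add: repr b_def)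
  have "m dvd Gcd {z::int. \<exists>k::int. rat_of_int z = rat_of_int k * poly f (of_int k)}
      \<longleftrightarrow> (\<forall>j\<le>Suc n. m dvd b j)"
    unfolding shift by (rule dvd_Gcd_gbinomial_values_iff)
  also have "\<dots> \<longleftrightarrow> (\<forall>j\<in>{1..n}. m dvd b j) \<and> m dvd b 1 \<and> m dvd b (Suc n)"
  proof (intro iffI allI impI)
    assume "\<forall>j\<le>Suc n. m dvd b j"
    then show "(\<forall>j\<in>{1..n}. m dvd b j) \<and> m dvd b 1 \<and> m dvd b (Suc n)"
      by auto
  next
    fix j
    assume "j \<le> Suc n"
      and b_dvd: "(\<forall>j\<in>{1..n}. m dvd b j) \<and> m dvd b 1 \<and> m dvd b (Suc n)"
    from \<open>j \<le> Suc n\<close> consider "j = 0" | "j \<in> {1..n}" | "j = Suc n"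
      by fastforce
    then show "m dvd b j"
      using b_dvd by cases (simp_all add: b_def)
  qed
  finally show ?thesis
    using zero_above by (simp add: b_def ac_simps)
qed

end
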